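(* Let $\oplus$ be a combinator. Then: (1) $\oplus$ satisfies ($\oplus$UB): $\min(\preceq_{1\oplus 2}, S) \subseteq \min(\preceq_1, S) \cup \min(\preceq_2, S)$ for all $S \subseteq W$ and all pairs in its domain, if and only if it satisfies ($\oplus$SPU+): for all $x,y,z \in W$, if $x \prec_1 y$ and $z \prec_2 y$ then $x \prec_{1\oplus 2} y$ or $z \prec_{1\oplus 2} y$. (2) $\oplus$ satisfies ($\oplus$LB): for all $S \subseteq W$, either $\min(\preceq_1, S) \subseteq \min(\preceq_{1\oplus 2}, S)$ or $\min(\preceq_2, S) \subseteq \min(\preceq_{1\oplus 2}, S)$, if and only if it satisfies ($\oplus$WPU+): for all $x,y,z \in W$, if $x \preceq_1 y$ and $z \preceq_2 y$ then $x \preceq_{1\oplus 2} y$ or $z \preceq_{1\oplus 2} y$. (All conditions are required for every pair $\langle \preceq_1, \preceq_2\rangle$ in the domain of $\oplus$.)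
   Context: $W$ is a finite nonempty set (of possible worlds). A tpo is a total preorder on $W$; for a tpo $\preceq$, $\prec$ is its strict part and $\sim$ its symmetric part. For $S \subseteq W$, $\min(\preceq, S) = \{x \in S : x \preceq y \text{ for all } y \in S\}$. A combinator is a function $\oplus$ taking pairs of tpos $\langle \preceq_1, \preceq_2\rangle$ (from its domain) to a tpo $\preceq_1 \oplus \preceq_2$, written $\preceq_{1\oplus 2}$, with strict part $\prec_{1\oplus 2}$. *)

theory Defs
  imports Main
begin

text \<open>The set W of possible worlds is modelled as a finite type 'w (nonempty automatically).
A preorder on W is a relation of type 'w rel; (x,y) \<in> R means x \<preceq> y.\<close>

definition tpo :: "'w rel \<Rightarrow> bool" where
  "tpo R \<longleftrightarrow> (\<forall>x y. (x,y) \<in> R \<or> (y,x) \<in> R) \<and> trans R"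

definition strict_part :: "'w rel \<Rightarrow> 'w rel" where
  "strict_part R = {(x,y). (x,y) \<in> R \<and> (y,x) \<notin> R}"

definition minset :: "'w rel \<Rightarrow> 'w set \<Rightarrow> 'w set" where
  "minset R S = {x \<in> S. \<forall>y \<in> S. (x,y) \<in> R}"

definition combinator :: "('w rel \<times> 'w rel) set \<Rightarrow> ('w rel \<Rightarrow> 'w rel \<Rightarrow> 'w rel) \<Rightarrow> bool" where
  "combinator D f \<longleftrightarrow> (\<forall>(R1,R2) \<in> D. tpo R1 \<and> tpo R2 \<and> tpo (f R1 R2))"

end

theory Submission
  imports Defs
begin

text \<open>Both equivalences hold pair by pair. The pointwise conditions follow by testing the set
conditions on \<open>{x, y, z}\<close>. Conversely, an element of \<open>S\<close> that is minimal for an input ordering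
but not for the combination, compared with a minimum \<open>m\<close> of \<open>S\<close> for the combination, violates
the pointwise condition; for the lower bound the existence of \<open>m\<close> needs finiteness of \<open>W\<close>.\<close>

lemma tpo_refl: "tpo R \<Longrightarrow> (x, x) \<in> R"
  unfolding tpo_def by blast

lemma tpo_total: "tpo R \<Longrightarrow> (x, y) \<notin> R \<Longrightarrow> (y, x) \<in> R"
  unfolding tpo_def by blast

lemma tpo_transD: "tpo R \<Longrightarrow> (x, y) \<in> R \<Longrightarrow> (y, z) \<in> R \<Longrightarrow> (x, z) \<in> R"
  unfolding tpo_def trans_def by blast

lemma minset_closed_below:
  assumes "tpo R" "y \<in> minset R S" "(x, y) \<in> R" "x \<in> S"
  shows "x \<in> minset R S"
  using assms tpo_transD[OF assms(1)] unfolding minset_def by blast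

lemma minset_nonempty:
  assumes "tpo R" "finite S" "S \<noteq> {}"
  shows "minset R S \<noteq> {}"
  using assms(2,3)
proof (induction S rule: finite_ne_induct)
  case (singleton x)
  then show ?case using tpo_refl[OF assms(1)] by (auto simp: minset_def)
next
  case (insert x F)
  then obtain m where m: "m \<in> minset R F" by blast
  show ?case
  proof (cases "(m, x) \<in> R")
    case True
    then show ?thesis using m by (auto simp: minset_def)
  next
    case False
    then have "(x, m) \<in> R" using tpo_total[OF assms(1)] by blast
    then have "x \<in> minset R (insert x F)"
      using m tpo_refl[OF assms(1)] tpo_transD[OF assms(1)] by (auto simp: minset_def)
    then show ?thesis by blast
  qed
qed

lemma minset_subset_Un_iff_strict_part:
  assumes "tpo R1" "tpo R2" "tpo R"
  shows "(\<forall>S. minset R S \<subseteq> minset R1 S \<union> minset R2 S) \<longleftrightarrow>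
    (\<forall>x y z. (x, y) \<in> strict_part R1 \<and> (z, y) \<in> strict_part R2
       \<longrightarrow> (x, y) \<in> strict_part R \<or> (z, y) \<in> strict_part R)"
proof (intro iffI allI impI)
  fix x y z
  assume ub: "\<forall>S. minset R S \<subseteq> minset R1 S \<union> minset R2 S"
    and strict: "(x, y) \<in> strict_part R1 \<and> (z, y) \<in> strict_part R2"
  show "(x, y) \<in> strict_part R \<or> (z, y) \<in> strict_part R"
  proof (rule ccontr)
    assume "\<not> ?thesis"
    then have "(y, x) \<in> R" "(y, z) \<in> R"
      using tpo_total[OF assms(3)] unfolding strict_part_def by blast+
    then have "y \<in> minset R {x, y, z}"
      using tpo_refl[OF assms(3)] by (auto simp: minset_def)
    then have "y \<in> minset R1 {x, y, z} \<union> minset R2 {x, y, z}" using ub by blast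
    then show False using strict by (auto simp: minset_def strict_part_def)
  qed
next
  fix S
  assume spu: "\<forall>x y z. (x, y) \<in> strict_part R1 \<and> (z, y) \<in> strict_part R2
       \<longrightarrow> (x, y) \<in> strict_part R \<or> (z, y) \<in> strict_part R"
  show "minset R S \<subseteq> minset R1 S \<union> minset R2 S"
  proof (rule subsetI, rule ccontr)
    fix y
    assume y: "y \<in> minset R S" and "y \<notin> minset R1 S \<union> minset R2 S"
    then obtain x z where "x \<in> S" "z \<in> S" "(y, x) \<notin> R1" "(y, z) \<notin> R2"
      by (auto simp: minset_def)
    then have "(x, y) \<in> strict_part R1" "(z, y) \<in> strict_part R2"
      using tpo_total[OF assms(1)] tpo_total[OF assms(2)] unfolding strict_part_def by blast+
    then have "(x, y) \<in> strict_part R \<or> (z, y) \<in> strict_part R" using spu by blast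
    then show False using y \<open>x \<in> S\<close> \<open>z \<in> S\<close> by (auto simp: minset_def strict_part_def)
  qed
qed

lemma minset_subset_either_iff_weak:
  fixes R1 R2 R :: "'w::finite rel"
  assumes "tpo R1" "tpo R2" "tpo R"
  shows "(\<forall>S. minset R1 S \<subseteq> minset R S \<or> minset R2 S \<subseteq> minset R S) \<longleftrightarrow>
    (\<forall>x y z. (x, y) \<in> R1 \<and> (z, y) \<in> R2 \<longrightarrow> (x, y) \<in> R \<or> (z, y) \<in> R)"
proof (intro iffI allI impI)
  fix x y z
  assume lb: "\<forall>S. minset R1 S \<subseteq> minset R S \<or> minset R2 S \<subseteq> minset R S"
    and weak: "(x, y) \<in> R1 \<and> (z, y) \<in> R2"
  show "(x, y) \<in> R \<or> (z, y) \<in> R"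
  proof (rule ccontr)
    assume not_below: "\<not> ?thesis"
    let ?S = "{x, y, z}"
    have min_R: "minset R ?S \<subseteq> {y}" using not_below by (auto simp: minset_def)
    have below_y_min: "u \<in> minset R ?S"
      if "tpo Q" "(u, y) \<in> Q" "u \<in> ?S" "minset Q ?S \<subseteq> minset R ?S" for Q u
    proof -
      have "minset Q ?S \<noteq> {}" using minset_nonempty[OF that(1)] by simp
      then have "y \<in> minset Q ?S" using that(4) min_R by blast
      then have "u \<in> minset Q ?S" using minset_closed_below[OF that(1)] that(2,3) by blast
      then show ?thesis using that(4) by blast
    qed
    from lb have "minset R1 ?S \<subseteq> minset R ?S \<or> minset R2 ?S \<subseteq> minset R ?S" by blast
    then have "x \<in> minset R ?S \<or> z \<in> minset R ?S"
      using below_y_min[OF assms(1)] below_y_min[OF assms(2)] weak by blast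
    then have "x = y \<or> z = y" using min_R by blast
    then show False using not_below tpo_refl[OF assms(3)] by blast
  qed
next
  fix S
  assume wpu: "\<forall>x y z. (x, y) \<in> R1 \<and> (z, y) \<in> R2 \<longrightarrow> (x, y) \<in> R \<or> (z, y) \<in> R"
  show "minset R1 S \<subseteq> minset R S \<or> minset R2 S \<subseteq> minset R S"
  proof (rule ccontr)
    assume "\<not> ?thesis"
    then obtain a b where a: "a \<in> minset R1 S" "a \<notin> minset R S"
      and b: "b \<in> minset R2 S" "b \<notin> minset R S" by blast
    have "a \<in> S" "b \<in> S" using a(1) b(1) by (simp_all add: minset_def)
    then obtain m where m: "m \<in> minset R S" using minset_nonempty[OF assms(3) finite] by blast
    have "(a, m) \<in> R1" "(b, m) \<in> R2" using a(1) b(1) m by (simp_all add: minset_def)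
    then have "(a, m) \<in> R \<or> (b, m) \<in> R" using wpu by blast
    then show False
      using minset_closed_below[OF assms(3) m] \<open>a \<in> S\<close> \<open>b \<in> S\<close> a(2) b(2) by blast
  qed
qed

theorem proposition3:
  fixes D :: "('w::finite rel \<times> 'w rel) set"
    and f :: "'w rel \<Rightarrow> 'w rel \<Rightarrow> 'w rel"
  assumes "combinator D f"
  shows "((\<forall>(R1,R2) \<in> D. \<forall>S. minset (f R1 R2) S \<subseteq> minset R1 S \<union> minset R2 S)
         \<longleftrightarrow> (\<forall>(R1,R2) \<in> D. \<forall>x y z. (x,y) \<in> strict_part R1 \<and> (z,y) \<in> strict_part R2
                \<longrightarrow> (x,y) \<in> strict_part (f R1 R2) \<or> (z,y) \<in> strict_part (f R1 R2)))
       \<and> ((\<forall>(R1,R2) \<in> D. \<forall>S. minset R1 S \<subseteq> minset (f R1 R2) S \<or> minset R2 S \<subseteq> minset (f R1 R2) S)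
         \<longleftrightarrow> (\<forall>(R1,R2) \<in> D. \<forall>x y z. (x,y) \<in> R1 \<and> (z,y) \<in> R2
                \<longrightarrow> (x,y) \<in> f R1 R2 \<or> (z,y) \<in> f R1 R2))"
proof -
  have tpos: "tpo R1" "tpo R2" "tpo (f R1 R2)" if "(R1, R2) \<in> D" for R1 R2
    using assms that unfolding combinator_def by blast+
  show ?thesis
    by (intro conjI ball_cong[OF refl]; clarify)
      (simp_all add: minset_subset_Un_iff_strict_part minset_subset_either_iff_weak tpos)
qed

end
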